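(* For any real $n\times n$ matrix $A$ there exist an integer $m$, a purely competitive $m\times m$ real matrix $B$, and an injective linear map $T:\mathbb R^n\to\mathbb R^m$ such that $TA=BT$.
   Context: A square real matrix $B$ is competitive if $B_{ij}\le 0$ for all $i\ne j$, and purely competitive if it is competitive and additionally $B_{ii}=0$ for all $i$. *)

theory Defs
  imports "Jordan_Normal_Form.Matrix"
begin

definition competitive :: "real mat \<Rightarrow> bool" where
  "competitive B \<longleftrightarrow> dim_row B = dim_col B \<and>
     (\<forall>i < dim_row B. \<forall>j < dim_col B. i \<noteq> j \<longrightarrow> B $$ (i, j) \<le> 0)"

definition purely_competitive :: "real mat \<Rightarrow> bool" where
  "purely_competitive B \<longleftrightarrow> competitive B \<and> (\<forall>i < dim_row B. B $$ (i, i) = 0)"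

end

theory Submission
  imports Defs
begin

text \<open>Split every coordinate into four copies weighted by the sign pattern
\<open>s = (1, 1, -1, -1)\<close>, that is, take \<open>T = I \<otimes> s\<close>.  Write \<open>A = N - P\<close> with \<open>N = min A 0\<close> and
\<open>P = -max A 0\<close> entrywise, so both are nonpositive, and choose fixed-point-free permutation
matrices \<open>X\<close>, \<open>Y\<close> of size 4 with \<open>X s = s\<close> and \<open>Y s = -s\<close>.  By the mixed-product rule
\<open>B = N \<otimes> X + P \<otimes> Y\<close> satisfies \<open>B T = N \<otimes> s - P \<otimes> s = T A\<close>; its entries are
nonpositive products and its diagonal vanishes because that of \<open>X\<close> and \<open>Y\<close> does.\<close>

lemma sum_lessThan_mult_nat:
  fixes g :: "nat \<Rightarrow> 'a::comm_monoid_add"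
  shows "(\<Sum>l<n * k. g l) = (\<Sum>a<n. \<Sum>b<k. g (a * k + b))"
proof -
  have "(\<Sum>l<n * k. g l) = (\<Sum>a<n. \<Sum>l = a * k..<a * k + k. g l)"
    by (rule sum.nat_group [symmetric])
  also have "\<dots> = (\<Sum>a<n. \<Sum>b<k. g (a * k + b))"
    by (simp add: sum.shift_bounds_nat_ivl [where m = 0, simplified] add.commute lessThan_atLeast0)
  finally show ?thesis .
qed

definition kronecker_product :: "'a::times mat \<Rightarrow> 'a mat \<Rightarrow> 'a mat" where
  "kronecker_product C X = mat (dim_row C * dim_row X) (dim_col C * dim_col X)
     (\<lambda>(i, j). C $$ (i div dim_row X, j div dim_col X) * X $$ (i mod dim_row X, j mod dim_col X))"

lemma dim_kronecker_product [simp]: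
  "dim_row (kronecker_product C X) = dim_row C * dim_row X"
  "dim_col (kronecker_product C X) = dim_col C * dim_col X"
  by (simp_all add: kronecker_product_def)

lemma kronecker_product_carrier_mat:
  "C \<in> carrier_mat m n \<Longrightarrow> X \<in> carrier_mat p q \<Longrightarrow>
   kronecker_product C X \<in> carrier_mat (m * p) (n * q)"
  by (rule carrier_matI) simp_all

lemma kronecker_product_one_carrier_mat:
  "S \<in> carrier_mat d 1 \<Longrightarrow> kronecker_product (1\<^sub>m n) S \<in> carrier_mat (n * d) n"
  using kronecker_product_carrier_mat [OF one_carrier_mat, of S d 1 n] by (simp only: mult_1_right)

lemma index_kronecker_product [simp]:
  "i < dim_row C * dim_row X \<Longrightarrow> j < dim_col C * dim_col X \<Longrightarrow>
   kronecker_product C X $$ (i, j) =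
     C $$ (i div dim_row X, j div dim_col X) * X $$ (i mod dim_row X, j mod dim_col X)"
  by (simp add: kronecker_product_def)

lemma kronecker_product_mult:
  fixes C D X Y :: "'a::comm_semiring_0 mat"
  assumes "C \<in> carrier_mat m k" "D \<in> carrier_mat k n" "X \<in> carrier_mat p q" "Y \<in> carrier_mat q r"
  shows "kronecker_product C X * kronecker_product D Y = kronecker_product (C * D) (X * Y)"
proof (rule eq_matI)
  fix i j assume "i < dim_row (kronecker_product (C * D) (X * Y))"
    and "j < dim_col (kronecker_product (C * D) (X * Y))"
  then have i: "i < m * p" and j: "j < n * r" using assms by simp_all
  then have "0 < p" "0 < r" by (auto intro: gr0I)
  have "(kronecker_product C X * kronecker_product D Y) $$ (i, j) =
      (\<Sum>l<k * q. C $$ (i div p, l div q) * X $$ (i mod p, l mod q) *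
                  (D $$ (l div q, j div r) * Y $$ (l mod q, j mod r)))"
    using assms i j by (simp add: scalar_prod_def atLeast0LessThan)
  also have "\<dots> = (\<Sum>a<k. \<Sum>b<q. C $$ (i div p, a) * D $$ (a, j div r) *
                                 (X $$ (i mod p, b) * Y $$ (b, j mod r)))"
    by (simp add: sum_lessThan_mult_nat mult_ac)
  also have "\<dots> = (\<Sum>a<k. C $$ (i div p, a) * D $$ (a, j div r)) *
                     (\<Sum>b<q. X $$ (i mod p, b) * Y $$ (b, j mod r))"
    by (simp add: sum_product)
  also have "\<dots> = (C * D) $$ (i div p, j div r) * (X * Y) $$ (i mod p, j mod r)"
    using assms i j \<open>0 < p\<close> \<open>0 < r\<close>
    by (simp add: scalar_prod_def atLeast0LessThan less_mult_imp_div_less)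
  also have "\<dots> = kronecker_product (C * D) (X * Y) $$ (i, j)"
    using assms i j by simp
  finally show "(kronecker_product C X * kronecker_product D Y) $$ (i, j) =
      kronecker_product (C * D) (X * Y) $$ (i, j)" .
qed (use assms in simp_all)

lemma kronecker_product_add_left:
  fixes C D X :: "'a::semiring_0 mat"
  assumes "C \<in> carrier_mat m n" "D \<in> carrier_mat m n"
  shows "kronecker_product (C + D) X = kronecker_product C X + kronecker_product D X"
  by (rule eq_matI) (use assms in \<open>auto simp: less_mult_imp_div_less distrib_right\<close>)

lemma kronecker_product_uminus_right_eq_left:
  fixes C X :: "'a::ring mat"
  shows "kronecker_product C (- X) = kronecker_product (- C) X"
proof (rule eq_matI)
  fix i j assume "i < dim_row (kronecker_product (- C) X)" "j < dim_col (kronecker_product (- C) X)"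
  then have "i < dim_row C * dim_row X" "j < dim_col C * dim_col X" by simp_all
  moreover from this have "0 < dim_row X" "0 < dim_col X" by (auto intro: gr0I)
  ultimately show "kronecker_product C (- X) $$ (i, j) = kronecker_product (- C) X $$ (i, j)"
    by (simp add: less_mult_imp_div_less)
qed simp_all

lemma kronecker_product_one_right:
  "kronecker_product C (1\<^sub>m 1) = (C :: 'a::semiring_1 mat)"
  by (rule eq_matI) simp_all

lemma mult_mat_vec_inj_on_if_left_inverse:
  fixes T L :: "'a::semiring_1 mat"
  assumes "T \<in> carrier_mat m n" "L \<in> carrier_mat n m" "L * T = 1\<^sub>m n"
  shows "inj_on (\<lambda>v. T *\<^sub>v v) (carrier_vec n)"
proof (rule inj_onI)
  fix v w assume v: "v \<in> carrier_vec n" and w: "w \<in> carrier_vec n" and "T *\<^sub>v v = T *\<^sub>v w"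
  have "v = L *\<^sub>v (T *\<^sub>v v)"
    using assms v by (simp add: assoc_mult_mat_vec [symmetric])
  also have "\<dots> = L *\<^sub>v (T *\<^sub>v w)" by (fact arg_cong [OF \<open>T *\<^sub>v v = T *\<^sub>v w\<close>])
  also have "\<dots> = w"
    using assms w by (simp add: assoc_mult_mat_vec [symmetric])
  finally show "v = w" .
qed

lemma purely_competitive_add:
  assumes "B \<in> carrier_mat m m" "B' \<in> carrier_mat m m"
    and "purely_competitive B" "purely_competitive B'"
  shows "purely_competitive (B + B')"
  using assms by (auto simp: purely_competitive_def competitive_def intro: add_nonpos_nonpos)

lemma purely_competitive_kronecker_product:
  fixes C X :: "real mat"
  assumes "C \<in> carrier_mat n n" "\<And>i j. i < n \<Longrightarrow> j < n \<Longrightarrow> C $$ (i, j) \<le> 0"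
    and "X \<in> carrier_mat d d" "\<And>i j. i < d \<Longrightarrow> j < d \<Longrightarrow> 0 \<le> X $$ (i, j)"
    and "\<And>i. i < d \<Longrightarrow> X $$ (i, i) = 0"
  shows "purely_competitive (kronecker_product C X)"
proof (cases "d = 0")
  case False
  then show ?thesis
    using assms
    by (auto simp: purely_competitive_def competitive_def less_mult_imp_div_less
             intro!: mult_nonpos_nonneg)
qed (use assms in \<open>simp add: purely_competitive_def competitive_def\<close>)

lemma inj_on_kronecker_product_one:
  fixes R S :: "'a::comm_semiring_1 mat"
  assumes R: "R \<in> carrier_mat 1 d" and S: "S \<in> carrier_mat d 1" and "R * S = 1\<^sub>m 1"
  shows "inj_on (\<lambda>v. kronecker_product (1\<^sub>m n) S *\<^sub>v v) (carrier_vec n)"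
proof -
  have "kronecker_product (1\<^sub>m n) R * kronecker_product (1\<^sub>m n) S =
      kronecker_product (1\<^sub>m n * 1\<^sub>m n) (R * S)"
    by (rule kronecker_product_mult [OF one_carrier_mat one_carrier_mat R S])
  also have "\<dots> = 1\<^sub>m n"
    unfolding \<open>R * S = 1\<^sub>m 1\<close> kronecker_product_one_right by simp
  finally have "kronecker_product (1\<^sub>m n) R * kronecker_product (1\<^sub>m n) S = 1\<^sub>m n" .
  moreover have "kronecker_product (1\<^sub>m n) S \<in> carrier_mat (n * d) n"
    by (rule kronecker_product_one_carrier_mat [OF S])
  moreover have "kronecker_product (1\<^sub>m n) R \<in> carrier_mat n (n * d)"
    using kronecker_product_carrier_mat [OF one_carrier_mat R] by (simp only: mult_1_right)
  ultimately show ?thesis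
    by (intro mult_mat_vec_inj_on_if_left_inverse)
qed

lemma kronecker_product_intertwines:
  fixes N P X Y S :: "'a::comm_ring_1 mat"
  assumes N: "N \<in> carrier_mat n n" and P: "P \<in> carrier_mat n n"
    and X: "X \<in> carrier_mat d d" and Y: "Y \<in> carrier_mat d d" and S: "S \<in> carrier_mat d 1"
    and XS: "X * S = S" and YS: "Y * S = - S"
  defines "T \<equiv> kronecker_product (1\<^sub>m n) S"
  shows "(kronecker_product N X + kronecker_product P Y) * T = T * (N - P)"
proof -
  have NP: "N - P \<in> carrier_mat n n"
    using P by (rule minus_carrier_mat)
  have NX: "kronecker_product N X * T = kronecker_product N S"
    by (simp only: T_def kronecker_product_mult [OF N one_carrier_mat X S] right_mult_one_mat [OF N] XS)
  have PY: "kronecker_product P Y * T = kronecker_product (- P) S"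
    by (simp only: T_def kronecker_product_mult [OF P one_carrier_mat Y S] right_mult_one_mat [OF P] YS
        kronecker_product_uminus_right_eq_left)
  have TNP: "T * kronecker_product (N - P) (1\<^sub>m 1) = kronecker_product (N - P) S"
    by (simp only: T_def kronecker_product_mult [OF one_carrier_mat NP S one_carrier_mat]
        left_mult_one_mat [OF NP] right_mult_one_mat [OF S])
  have "(kronecker_product N X + kronecker_product P Y) * T =
      kronecker_product N X * T + kronecker_product P Y * T"
    using kronecker_product_carrier_mat [OF N X] kronecker_product_carrier_mat [OF P Y]
      kronecker_product_one_carrier_mat [OF S]
    unfolding T_def by (rule add_mult_distrib_mat)
  also have "\<dots> = kronecker_product N S + kronecker_product (- P) S"
    by (simp only: NX PY)
  also have "\<dots> = kronecker_product (N - P) S"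
    unfolding minus_add_uminus_mat [OF N P]
    by (rule kronecker_product_add_left [OF N uminus_carrier_mat [OF P], symmetric])
  also have "\<dots> = T * (N - P)"
    by (simp only: TNP [symmetric] kronecker_product_one_right)
  finally show ?thesis .
qed

definition sign_pattern :: "real mat" where
  "sign_pattern = mat_of_cols_list 4 [[1, 1, -1, -1]]"

definition swap_within_halves :: "real mat" where
  "swap_within_halves = mat_of_rows_list 4 [[0, 1, 0, 0], [1, 0, 0, 0], [0, 0, 0, 1], [0, 0, 1, 0]]"

definition swap_halves :: "real mat" where
  "swap_halves = mat_of_rows_list 4 [[0, 0, 1, 0], [0, 0, 0, 1], [1, 0, 0, 0], [0, 1, 0, 0]]"

lemma sign_pattern_carrier_mat: "sign_pattern \<in> carrier_mat 4 1"
  by (rule carrier_matI) (simp_all add: sign_pattern_def mat_of_cols_list_def)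

lemma swap_within_halves_carrier_mat: "swap_within_halves \<in> carrier_mat 4 4"
  by (rule carrier_matI) (simp_all add: swap_within_halves_def mat_of_rows_list_def)

lemma swap_halves_carrier_mat: "swap_halves \<in> carrier_mat 4 4"
  by (rule carrier_matI) (simp_all add: swap_halves_def mat_of_rows_list_def)

lemma swap_within_halves_sign_pattern: "swap_within_halves * sign_pattern = sign_pattern"
  by (rule eq_matI)
    (auto simp: swap_within_halves_def sign_pattern_def mat_of_rows_list_def mat_of_cols_list_def
       scalar_prod_def row_def col_def sum.atLeast0_lessThan_Suc eval_nat_numeral less_Suc_eq)

lemma swap_halves_sign_pattern: "swap_halves * sign_pattern = - sign_pattern"
  by (rule eq_matI)
    (auto simp: swap_halves_def sign_pattern_def mat_of_rows_list_def mat_of_cols_list_def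
       scalar_prod_def row_def col_def sum.atLeast0_lessThan_Suc eval_nat_numeral less_Suc_eq)

lemma sign_pattern_left_inverse: "mat_of_rows_list 4 [[1, 0, 0, 0]] * sign_pattern = 1\<^sub>m 1"
  by (rule eq_matI)
    (auto simp: sign_pattern_def mat_of_rows_list_def mat_of_cols_list_def
       scalar_prod_def row_def col_def sum.atLeast0_lessThan_Suc eval_nat_numeral less_Suc_eq)

lemma swap_within_halves_nonneg: "i < 4 \<Longrightarrow> j < 4 \<Longrightarrow> 0 \<le> swap_within_halves $$ (i, j)"
  and swap_within_halves_diag: "i < 4 \<Longrightarrow> swap_within_halves $$ (i, i) = 0"
  by (auto simp: swap_within_halves_def mat_of_rows_list_def eval_nat_numeral less_Suc_eq)

lemma swap_halves_nonneg: "i < 4 \<Longrightarrow> j < 4 \<Longrightarrow> 0 \<le> swap_halves $$ (i, j)"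
  and swap_halves_diag: "i < 4 \<Longrightarrow> swap_halves $$ (i, i) = 0"
  by (auto simp: swap_halves_def mat_of_rows_list_def eval_nat_numeral less_Suc_eq)

definition sign_embedding :: "nat \<Rightarrow> real mat" where
  "sign_embedding n = kronecker_product (1\<^sub>m n) sign_pattern"

definition competitive_lift :: "real mat \<Rightarrow> real mat" where
  "competitive_lift A =
     kronecker_product (map_mat (\<lambda>x. min x 0) A) swap_within_halves +
     kronecker_product (map_mat (\<lambda>x. - max x 0) A) swap_halves"

lemma sign_embedding_carrier_mat: "sign_embedding n \<in> carrier_mat (n * 4) n"
  unfolding sign_embedding_def by (rule kronecker_product_one_carrier_mat [OF sign_pattern_carrier_mat])

lemma inj_on_sign_embedding: "inj_on (\<lambda>v. sign_embedding n *\<^sub>v v) (carrier_vec n)"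
  unfolding sign_embedding_def
  by (rule inj_on_kronecker_product_one [OF _ sign_pattern_carrier_mat sign_pattern_left_inverse])
    (rule carrier_matI; simp add: mat_of_rows_list_def)

lemma competitive_lift_carrier_mat:
  "A \<in> carrier_mat n n \<Longrightarrow> competitive_lift A \<in> carrier_mat (n * 4) (n * 4)"
  unfolding competitive_lift_def
  by (rule add_carrier_mat [OF kronecker_product_carrier_mat [OF _ swap_halves_carrier_mat]]) simp

lemma purely_competitive_competitive_lift:
  assumes "A \<in> carrier_mat n n"
  shows "purely_competitive (competitive_lift A)"
proof -
  define N where "N = map_mat (\<lambda>x. min x 0) A"
  define P where "P = map_mat (\<lambda>x. - max x 0) A"
  have N: "N \<in> carrier_mat n n" and P: "P \<in> carrier_mat n n"
    using assms by (simp_all add: N_def P_def)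
  have N_nonpos: "N $$ (i, j) \<le> 0" and P_nonpos: "P $$ (i, j) \<le> 0" if "i < n" "j < n" for i j
    using assms that by (simp_all add: N_def P_def)
  show ?thesis
    unfolding competitive_lift_def N_def [symmetric] P_def [symmetric]
    by (rule purely_competitive_add
        [OF kronecker_product_carrier_mat [OF N swap_within_halves_carrier_mat]
            kronecker_product_carrier_mat [OF P swap_halves_carrier_mat]
            purely_competitive_kronecker_product [OF N N_nonpos swap_within_halves_carrier_mat
              swap_within_halves_nonneg swap_within_halves_diag]
            purely_competitive_kronecker_product [OF P P_nonpos swap_halves_carrier_mat
              swap_halves_nonneg swap_halves_diag]])
qed

lemma competitive_lift_intertwines:
  assumes "A \<in> carrier_mat n n"
  shows "competitive_lift A * sign_embedding n = sign_embedding n * A"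
proof -
  define N where "N = map_mat (\<lambda>x. min x 0) A"
  define P where "P = map_mat (\<lambda>x. - max x 0) A"
  have N: "N \<in> carrier_mat n n" and P: "P \<in> carrier_mat n n"
    using assms by (simp_all add: N_def P_def)
  have "A = N - P"
    by (rule eq_matI) (use assms in \<open>auto simp: N_def P_def min_def max_def\<close>)
  moreover have "competitive_lift A * sign_embedding n = sign_embedding n * (N - P)"
    unfolding competitive_lift_def sign_embedding_def N_def [symmetric] P_def [symmetric]
    by (rule kronecker_product_intertwines [OF N P swap_within_halves_carrier_mat swap_halves_carrier_mat
          sign_pattern_carrier_mat swap_within_halves_sign_pattern swap_halves_sign_pattern])
  ultimately show ?thesis by simp
qed

theorem lemma4:
  fixes A :: "real mat" and n :: nat
  assumes "A \<in> carrier_mat n n"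
  shows "\<exists>(m::nat) (B::real mat) (T::real mat).
           B \<in> carrier_mat m m \<and> purely_competitive B \<and>
           T \<in> carrier_mat m n \<and> inj_on (\<lambda>v. T *\<^sub>v v) (carrier_vec n) \<and>
           T * A = B * T"
proof (intro exI conjI)
  show "competitive_lift A \<in> carrier_mat (n * 4) (n * 4)"
    using assms by (rule competitive_lift_carrier_mat)
  show "purely_competitive (competitive_lift A)"
    using assms by (rule purely_competitive_competitive_lift)
  show "sign_embedding n \<in> carrier_mat (n * 4) n"
    by (rule sign_embedding_carrier_mat)
  show "inj_on (\<lambda>v. sign_embedding n *\<^sub>v v) (carrier_vec n)"
    by (rule inj_on_sign_embedding)
  show "sign_embedding n * A = competitive_lift A * sign_embedding n"
    using assms by (rule competitive_lift_intertwines [symmetric])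
qed

end
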